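(* Let $0<s_1<s_2<1$, $2s_1<d<\frac{2s_1s_2}{s_2-s_1}$, and suppose $g$ satisfies $(G_1)$–$(G_2)$ and $V$ satisfies $(V_2)$. Then for every $a>0$ there exists $\delta_a>0$ such that $$\inf\{t>0:\ \exists u\in S_a \text{ with } |\nabla_{s_1}u|_2^2+|\nabla_{s_2}u|_2^2=1 \text{ and } t*u\in\mathcal{P}_a\}\ge\delta_a.$$ Consequently, $\inf_{u\in\mathcal{P}_a}\big(|\nabla_{s_1}u|_2^2+|\nabla_{s_2}u|_2^2\big)\ge\delta_a^2>0$.
   Context: For $s\in(0,1)$, $|\nabla_s u|_2^2=\int_{\mathbb{R}^d\times\mathbb{R}^d}\frac{|u(x)-u(y)|^2}{|x-y|^{d+2s}}dx\,dy$; $|\cdot|_p$ is the $L^p(\mathbb{R}^d)$ norm; $H^{s_1,s_2}(\mathbb{R}^d)=\{u\in L^2(\mathbb{R}^d):|\nabla_{s_1}u|_2<\infty,\ |\nabla_{s_2}u|_2<\infty\}$. $S_a=\{u\in H^{s_1,s_2}(\mathbb{R}^d):|u|_2^2=a\}$; $(t*u)(x)=t^{d/2}u(tx)$ for $t>0$. $g:\mathbb{R}\to\mathbb{R}$, $G(s)=\int_0^sg$, $\widetilde G(s)=\frac12g(s)s-G(s)$. $(G_1)$: $g$ continuous, odd. $(G_2)$: there exist $\alpha,\beta$ with $2+\frac{4s_2}{d}<\alpha<\beta<\frac{2d}{d-2s_1}$ and $\alpha G(s)\le g(s)s\le\beta G(s)$ for all $s$. $V:\mathbb{R}^d\to\mathbb{R}$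 is a potential; $\sigma_1\in[0,\frac{d(\alpha-2)-4}{d(\alpha-2)}]$ is a fixed constant (the one associated with $V$ in the paper's assumption $(V_1)$). $(V_2)$: $\nabla V(x)$ exists for a.e. $x$; with $W(x)=\frac12\langle\nabla V(x),x\rangle$, $\lim_{|x|\to\infty}W(x)=0$ and there is $\sigma_2$ with $0<\sigma_2<\min\{s_1-\frac{(\beta-2)d}{2\beta},\frac{d(\alpha-2)(1-\sigma_1)}{4}-s_2\}$ and $|\int W u^2dx|\le\sigma_2(|\nabla_{s_1}u|_2^2+|\nabla_{s_2}u|_2^2)$ for all $u\in H^{s_1,s_2}(\mathbb{R}^d)$. $P(u)=s_1|\nabla_{s_1}u|_2^2+s_2|\nabla_{s_2}u|_2^2-\frac12\int_{\mathbb{R}^d}\langle\nabla V(x),x\rangle u^2dx-d\int_{\mathbb{R}^d}\widetilde G(u)dx$; $\mathcal{P}_a=\{u\in S_a:P(u)=0\}$. *)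

theory Defs
  imports "HOL-Analysis.Analysis"
begin

definition gagliardo_nn :: "real \<Rightarrow> ('a::euclidean_space \<Rightarrow> real) \<Rightarrow> ennreal" where
  "gagliardo_nn s u =
     (\<integral>\<^sup>+ x. (\<integral>\<^sup>+ y. ennreal ((u x - u y)\<^sup>2 / (norm (x - y)) powr (real DIM('a) + 2 * s)) \<partial>lborel) \<partial>lborel)"

definition gagliardo :: "real \<Rightarrow> ('a::euclidean_space \<Rightarrow> real) \<Rightarrow> real" where
  "gagliardo s u = enn2real (gagliardo_nn s u)"

definition L2sq :: "('a::euclidean_space \<Rightarrow> real) \<Rightarrow> real" where
  "L2sq u = (\<integral> x. (u x)\<^sup>2 \<partial>lborel)"

definition in_H :: "real \<Rightarrow> real \<Rightarrow> ('a::euclidean_space \<Rightarrow> real) \<Rightarrow> bool" where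
  "in_H s1 s2 u \<longleftrightarrow> u \<in> borel_measurable lborel \<and> integrable lborel (\<lambda>x. (u x)\<^sup>2)
      \<and> gagliardo_nn s1 u < \<infinity> \<and> gagliardo_nn s2 u < \<infinity>"

definition S_set :: "real \<Rightarrow> real \<Rightarrow> real \<Rightarrow> ('a::euclidean_space \<Rightarrow> real) set" where
  "S_set s1 s2 a = {u. in_H s1 s2 u \<and> L2sq u = a}"

definition dil :: "real \<Rightarrow> ('a::euclidean_space \<Rightarrow> real) \<Rightarrow> ('a \<Rightarrow> real)" where
  "dil t u = (\<lambda>x. t powr (real DIM('a) / 2) * u (t *\<^sub>R x))"

definition Gprim :: "(real \<Rightarrow> real) \<Rightarrow> real \<Rightarrow> real" where
  "Gprim g s = (LBINT t=0..s. g t)"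

definition Gtil :: "(real \<Rightarrow> real) \<Rightarrow> real \<Rightarrow> real" where
  "Gtil g s = 1/2 * g s * s - Gprim g s"

text \<open>P(u), with gradV the (a.e.) gradient of V.\<close>
definition Pfun :: "real \<Rightarrow> real \<Rightarrow> ('a::euclidean_space \<Rightarrow> 'a) \<Rightarrow> (real \<Rightarrow> real) \<Rightarrow> ('a \<Rightarrow> real) \<Rightarrow> real" where
  "Pfun s1 s2 gradV g u =
     s1 * gagliardo s1 u + s2 * gagliardo s2 u
     - 1/2 * (\<integral> x. (gradV x \<bullet> x) * (u x)\<^sup>2 \<partial>lborel)
     - real DIM('a) * (\<integral> x. Gtil g (u x) \<partial>lborel)"

definition P_set :: "real \<Rightarrow> real \<Rightarrow> ('a::euclidean_space \<Rightarrow> 'a) \<Rightarrow> (real \<Rightarrow> real) \<Rightarrow> real \<Rightarrow> ('a \<Rightarrow> real) set" where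
  "P_set s1 s2 gradV g a = {u \<in> S_set s1 s2 a. Pfun s1 s2 gradV g u = 0}"

end

theory Submission
  imports Defs
begin

text \<open>
  Write \<open>S(u) = |\<nabla>\<^sub>s\<^sub>1 u|\<^sub>2\<^sup>2 + |\<nabla>\<^sub>s\<^sub>2 u|\<^sub>2\<^sup>2\<close>. On the Pohozaev manifold the identity \<open>P(u) = 0\<close> and the
  bound on \<open>\<langle>\<nabla>V(x), x\<rangle>\<close> give \<open>(s\<^sub>1 - \<sigma>\<^sub>2) S(u) \<le> d \<integral> G\<^sup>~(u)\<close>. The Ambrosetti--Rabinowitz condition
  bounds \<open>G\<^sup>~(s)\<close> by a multiple of \<open>|s|\<^sup>\<alpha> + |s|\<^sup>\<beta>\<close>, and a fractional Gagliardo--Nirenberg inequality bounds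
  \<open>\<integral> |u|\<^sup>p\<close> on the \<open>L\<^sup>2\<close>-sphere by \<open>C |\<nabla>\<^sub>s\<^sub>1 u|\<^sub>2\<^sup>2\<^sup>\<theta>\<close> with \<open>\<theta> = d(p - 2)/(4 s\<^sub>1)\<close>. As \<open>\<alpha> > 2 + 4 s\<^sub>1/d\<close>,
  both exponents exceed 1, so \<open>S(u)\<close> is bounded below by some \<open>\<delta>\<^sub>0 > 0\<close> on \<open>\<P>\<^sub>a\<close>. Since
  \<open>|\<nabla>\<^sub>s (t * u)|\<^sub>2\<^sup>2 = t\<^sup>2\<^sup>s |\<nabla>\<^sub>s u|\<^sub>2\<^sup>2\<close>, a normalized \<open>u\<close> with \<open>t * u \<in> \<P>\<^sub>a\<close> and \<open>t < 1\<close> satisfies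
  \<open>\<delta>\<^sub>0 \<le> t\<^sup>2\<^sup>s\<^sup>1\<close>.

  The Gagliardo--Nirenberg inequality is proved by a level-set argument in the spirit of De Giorgi:
  with \<open>m(\<lambda>) = |{|u| > \<lambda>}|\<close> one has \<open>m(\<lambda>) \<le> c |\<nabla>\<^sub>s u|\<^sub>2\<^sup>2 \<lambda>\<^sup>-\<^sup>2 m(\<lambda>/2)\<^sup>2\<^sup>s\<^sup>/\<^sup>d\<close>. Iterating this from
  Chebyshev's bound \<open>m(\<lambda>) \<le> a \<lambda>\<^sup>-\<^sup>2\<close> yields decay \<open>m(\<lambda>) \<le> C \<lambda>\<^sup>-\<^sup>q\<close> for every \<open>q < 2d/(d - 2s)\<close>, and
  a dyadic layer-cake sum turns this into the \<open>L\<^sup>p\<close> bound.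
\<close>

section \<open>Growth of the primitive of the nonlinearity\<close>

lemma ratio_powr_increasing:
  fixes F f :: "real \<Rightarrow> real"
  assumes F: "\<And>x. (F has_real_derivative f x) (at x)"
    and growth: "\<And>x. x > 0 \<Longrightarrow> p * F x \<le> f x * x"
    and xy: "0 < x" "x \<le> y"
  shows "F x / x powr p \<le> F y / y powr p"
proof (rule DERIV_nonneg_imp_increasing_open[OF xy(2)])
  define F' where "F' z = (f z * z powr p - F z * (p * z powr (p - 1))) / (z powr p * z powr p)" for z
  have deriv: "((\<lambda>x. F x / x powr p) has_real_derivative F' z) (at z)" if "z > 0" for z
    using that unfolding F'_def by (auto intro!: derivative_eq_intros F)
  have "0 \<le> F' z" if "z > 0" for z
  proof -
    have "f z * z powr p - F z * (p * z powr (p - 1)) = z powr (p - 1) * (f z * z - p * F z)"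
      using that by (simp add: powr_diff algebra_simps powr_minus divide_simps)
    then show ?thesis
      using growth[OF that] that unfolding F'_def by simp
  qed
  with deriv show "\<exists>y. ((\<lambda>x. F x / x powr p) has_real_derivative y) (at z) \<and> 0 \<le> y"
    if "x < z" "z < y" for z
    using that xy by (meson less_trans)
  show "continuous_on {x..y} (\<lambda>x. F x / x powr p)"
    using xy by (intro continuous_at_imp_continuous_on ballI DERIV_isCont) (auto intro: deriv)
qed

lemma ratio_powr_decreasing:
  fixes F f :: "real \<Rightarrow> real"
  assumes F: "\<And>x. (F has_real_derivative f x) (at x)"
    and growth: "\<And>x. x > 0 \<Longrightarrow> f x * x \<le> p * F x"
    and xy: "0 < x" "x \<le> y"
  shows "F y / y powr p \<le> F x / x powr p"
proof -
  have "(- F x) / x powr p \<le> (- F y) / y powr p"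
    by (rule ratio_powr_increasing[where f = "\<lambda>x. - f x"])
       (auto intro!: derivative_eq_intros F growth xy)
  then show ?thesis by (simp only: minus_divide_left)
qed

text \<open>Below 1 the lower Ambrosetti--Rabinowitz exponent controls \<open>F\<close>, above 1 the upper one.\<close>
lemma AR_growth_le_powr:
  fixes F f :: "real \<Rightarrow> real"
  assumes F: "\<And>x. (F has_real_derivative f x) (at x)"
    and AR: "\<And>x. \<alpha> * F x \<le> f x * x \<and> f x * x \<le> \<beta> * F x"
    and F_nonneg: "0 \<le> F 1" and x: "0 < x"
  shows "F x \<le> F 1 * (x powr \<alpha> + x powr \<beta>)"
proof (cases "x \<le> 1")
  case True
  have "F x / x powr \<alpha> \<le> F 1 / 1 powr \<alpha>"
    by (rule ratio_powr_increasing[OF F]) (use AR x True in auto)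
  then have "F x \<le> F 1 * x powr \<alpha>"
    using x by (simp add: divide_simps)
  also have "\<dots> \<le> F 1 * (x powr \<alpha> + x powr \<beta>)"
    using F_nonneg by (intro mult_left_mono) auto
  finally show ?thesis .
next
  case False
  have "F x / x powr \<beta> \<le> F 1 / 1 powr \<beta>"
    by (rule ratio_powr_decreasing[OF F]) (use AR x False in auto)
  then have "F x \<le> F 1 * x powr \<beta>"
    using x by (simp add: divide_simps)
  also have "\<dots> \<le> F 1 * (x powr \<alpha> + x powr \<beta>)"
    using F_nonneg by (intro mult_left_mono) auto
  finally show ?thesis .
qed

lemma Gprim_0 [simp]: "Gprim g 0 = 0"
  by (simp add: Gprim_def zero_ereal_def)

lemma Gprim_has_real_derivative:
  assumes "continuous_on UNIV g"
  shows "(Gprim g has_real_derivative g x) (at x)"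
proof -
  have "((\<lambda>u. LBINT y=0..u. g y) has_vector_derivative g x) (at x within {-\<bar>x\<bar>-1..\<bar>x\<bar>+1})"
    using interval_integral_FTC2[of "-\<bar>x\<bar>-1" 0 "\<bar>x\<bar>+1" g x] continuous_on_subset[OF assms]
    by (simp add: zero_ereal_def)
  then have "((\<lambda>u. LBINT y=0..u. g y) has_vector_derivative g x) (at x)"
    by (subst (asm) at_within_Icc_at) auto
  then show ?thesis
    unfolding Gprim_def[abs_def] by (simp add: has_real_derivative_iff_has_vector_derivative)
qed

locale AR_nonlinearity =
  fixes g :: "real \<Rightarrow> real" and \<alpha> \<beta> :: real
  assumes continuous: "continuous_on UNIV g"
    and AR: "\<And>s. \<alpha> * Gprim g s \<le> g s * s \<and> g s * s \<le> \<beta> * Gprim g s"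
    and exponents: "\<alpha> < \<beta>"
begin

lemma Gprim_nonneg: "0 \<le> Gprim g s"
proof -
  have "0 \<le> (\<beta> - \<alpha>) * Gprim g s"
    using AR[of s] by (simp add: algebra_simps)
  then show ?thesis
    using exponents by (simp add: zero_le_mult_iff)
qed

lemma Gtil_le_Gprim: "Gtil g s \<le> (\<beta> / 2 - 1) * Gprim g s"
  using AR[of s] unfolding Gtil_def by (simp add: algebra_simps)

lemma Gprim_le_powr:
  "Gprim g s \<le> (Gprim g 1 + Gprim g (-1)) * (\<bar>s\<bar> powr \<alpha> + \<bar>s\<bar> powr \<beta>)"
proof -
  have G: "(Gprim g has_real_derivative g x) (at x)" for x
    using Gprim_has_real_derivative[OF continuous] .
  have "((\<lambda>x. Gprim g (- x)) has_real_derivative g (- x) * (- 1)) (at x)" for x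
    by (rule DERIV_chain2[OF G]) (auto intro!: derivative_eq_intros)
  then have G_reflected: "((\<lambda>x. Gprim g (- x)) has_real_derivative - g (- x)) (at x)" for x
    by simp
  have AR_reflected: "\<alpha> * Gprim g (- x) \<le> - g (- x) * x \<and> - g (- x) * x \<le> \<beta> * Gprim g (- x)" for x
    using AR[of "- x"] by simp
  consider "s = 0" | "0 < s" | "0 < - s"
    by linarith
  then show ?thesis
  proof cases
    case 2
    then have "Gprim g s \<le> Gprim g 1 * (s powr \<alpha> + s powr \<beta>)"
      by (intro AR_growth_le_powr[OF G AR] Gprim_nonneg)
    also have "\<dots> \<le> (Gprim g 1 + Gprim g (-1)) * (s powr \<alpha> + s powr \<beta>)"
      using Gprim_nonneg[of "-1"] by (intro mult_right_mono) auto
    finally show ?thesis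
      using 2 by simp
  next
    case 3
    then have "Gprim g (- (- s)) \<le> Gprim g (- 1) * ((- s) powr \<alpha> + (- s) powr \<beta>)"
      using AR_growth_le_powr[OF G_reflected AR_reflected, of "- s"] Gprim_nonneg by simp
    also have "\<dots> \<le> (Gprim g 1 + Gprim g (-1)) * ((- s) powr \<alpha> + (- s) powr \<beta>)"
      using Gprim_nonneg[of 1] by (intro mult_right_mono) auto
    finally show ?thesis
      using 3 by simp
  qed simp
qed

lemma Gtil_le_powr:
  assumes "2 \<le> \<beta>"
  shows "Gtil g s \<le> (\<beta> / 2 - 1) * (Gprim g 1 + Gprim g (-1)) * (\<bar>s\<bar> powr \<alpha> + \<bar>s\<bar> powr \<beta>)"
proof -
  have "Gtil g s \<le> (\<beta> / 2 - 1) * Gprim g s"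
    by (rule Gtil_le_Gprim)
  also have "\<dots> \<le> (\<beta> / 2 - 1) * ((Gprim g 1 + Gprim g (-1)) * (\<bar>s\<bar> powr \<alpha> + \<bar>s\<bar> powr \<beta>))"
    using assms Gprim_le_powr by (intro mult_left_mono) auto
  finally show ?thesis
    by (simp only: mult.assoc)
qed

end

section \<open>A fractional Gagliardo--Nirenberg inequality\<close>

definition gagliardo_density :: "real \<Rightarrow> ('a::euclidean_space \<Rightarrow> real) \<Rightarrow> 'a \<Rightarrow> ennreal" where
  "gagliardo_density s u x =
     (\<integral>\<^sup>+ y. ennreal ((u x - u y)\<^sup>2 / (norm (x - y)) powr (real DIM('a) + 2 * s)) \<partial>lborel)"

lemma gagliardo_nn_eq_nn_integral_density:
  "gagliardo_nn s u = (\<integral>\<^sup>+ x. gagliardo_density s u x \<partial>lborel)"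
  by (simp add: gagliardo_nn_def gagliardo_density_def)

lemma borel_measurable_gagliardo_density:
  fixes u :: "'a::euclidean_space \<Rightarrow> real"
  assumes [measurable]: "u \<in> borel_measurable lborel"
  shows "gagliardo_density s u \<in> borel_measurable borel"
proof -
  have "gagliardo_density s u \<in> borel_measurable lborel"
    unfolding gagliardo_density_def[abs_def] by measurable
  then show ?thesis
    by simp
qed

lemma gagliardo_nonneg: "0 \<le> gagliardo s u"
  by (simp add: gagliardo_def)

lemma emeasure_level_set_le_L2:
  fixes u :: "'a::euclidean_space \<Rightarrow> real"
  assumes [measurable]: "u \<in> borel_measurable lborel"
    and L2: "(\<integral>\<^sup>+ x. ennreal ((u x)\<^sup>2) \<partial>lborel) \<le> ennreal a"
    and l: "0 < l"
  shows "emeasure lborel {x. l < \<bar>u x\<bar>} \<le> ennreal (a * l powr (-2))"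
proof -
  define S where "S = {x. l < \<bar>u x\<bar>}"
  have S[measurable]: "S \<in> sets lborel"
    unfolding S_def by measurable
  have "ennreal (l\<^sup>2) * emeasure lborel S = (\<integral>\<^sup>+ x. ennreal (l\<^sup>2) * indicator S x \<partial>lborel)"
    by (rule nn_integral_cmult_indicator[symmetric]) (rule S)
  also have "\<dots> \<le> (\<integral>\<^sup>+ x. ennreal ((u x)\<^sup>2) \<partial>lborel)"
  proof (intro nn_integral_mono)
    fix x
    have "l\<^sup>2 \<le> (u x)\<^sup>2" if "x \<in> S"
      using that l power_mono[of l "\<bar>u x\<bar>" 2] unfolding S_def by simp
    then show "ennreal (l\<^sup>2) * indicator S x \<le> ennreal ((u x)\<^sup>2)"
      by (cases "x \<in> S") auto
  qed
  also note L2
  finally have "ennreal (l\<^sup>2) * emeasure lborel S \<le> ennreal a" .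
  then have "ennreal (1 / l\<^sup>2) * (ennreal (l\<^sup>2) * emeasure lborel S) \<le> ennreal (1 / l\<^sup>2) * ennreal a"
    by (rule mult_left_mono) simp
  moreover have "ennreal (1 / l\<^sup>2) * ennreal (l\<^sup>2) = 1"
    using l by (simp flip: ennreal_mult)
  moreover have "ennreal (1 / l\<^sup>2) * ennreal a \<le> ennreal (a * l powr (-2))"
    using l by (cases "0 \<le> a") (auto simp: ennreal_neg powr_minus_divide powr_numeral
        simp flip: ennreal_mult)
  ultimately show ?thesis
    unfolding S_def by (simp add: mult.assoc[symmetric])
qed

text \<open>A point where \<open>\<bar>u\<bar> > \<lambda>\<close> sees a jump of at least \<open>\<lambda>/2\<close> to every point of the ball where \<open>\<bar>u\<bar> \<le> \<lambda>/2\<close>.\<close>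
lemma gagliardo_density_ge_ball:
  fixes u :: "'a::euclidean_space \<Rightarrow> real"
  assumes [measurable]: "u \<in> borel_measurable lborel"
    and s: "0 \<le> s" and lam: "0 < lam" "lam < \<bar>u x\<bar>" and r: "0 < r"
  shows "ennreal ((lam / 2)\<^sup>2 / r powr (real DIM('a) + 2 * s)
            * measure lborel (ball x r \<inter> {y. \<bar>u y\<bar> \<le> lam / 2}))
         \<le> gagliardo_density s u x"
proof -
  define B where "B = ball x r \<inter> {y. \<bar>u y\<bar> \<le> lam / 2}"
  define c where "c = (lam / 2)\<^sup>2 / r powr (real DIM('a) + 2 * s)"
  have B[measurable]: "B \<in> sets lborel"
    unfolding B_def by measurable
  have "emeasure lborel B \<le> emeasure lborel (ball x r)"
    unfolding B_def by (intro emeasure_mono) auto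
  then have "emeasure lborel B = ennreal (measure lborel B)"
    using emeasure_lborel_ball_finite[of x r] by (intro emeasure_eq_ennreal_measure) (auto simp: top_unique)
  moreover have "0 \<le> c"
    unfolding c_def by simp
  ultimately have "ennreal (c * measure lborel B) = ennreal c * emeasure lborel B"
    by (simp add: ennreal_mult)
  also have "\<dots> = (\<integral>\<^sup>+ y. ennreal c * indicator B y \<partial>lborel)"
    by (rule nn_integral_cmult_indicator[symmetric]) (rule B)
  also have "\<dots> \<le> gagliardo_density s u x"
    unfolding gagliardo_density_def
  proof (intro nn_integral_mono)
    fix y
    show "ennreal c * indicator B y
          \<le> ennreal ((u x - u y)\<^sup>2 / (norm (x - y)) powr (real DIM('a) + 2 * s))"
    proof (cases "y \<in> B")
      case True
      then have near: "norm (x - y) < r" and small: "\<bar>u y\<bar> \<le> lam / 2"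
        by (auto simp: B_def dist_norm)
      have jump: "lam / 2 \<le> \<bar>u x - u y\<bar>"
        using lam small by linarith
      then have "(lam / 2)\<^sup>2 \<le> (u x - u y)\<^sup>2"
        using lam power_mono[OF jump, of 2] by simp
      moreover have "0 < norm (x - y)"
        using jump lam by auto
      moreover have "norm (x - y) powr (real DIM('a) + 2 * s) \<le> r powr (real DIM('a) + 2 * s)"
        using near s \<open>0 < norm (x - y)\<close> by (intro powr_mono2) auto
      ultimately have "c \<le> (u x - u y)\<^sup>2 / (norm (x - y)) powr (real DIM('a) + 2 * s)"
        unfolding c_def by (intro frac_le) auto
      then show ?thesis
        using True by simp
    qed simp
  qed
  finally show ?thesis
    unfolding B_def c_def .
qed

lemma measure_ball_le_level_set:
  fixes u :: "'a::euclidean_space \<Rightarrow> real"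
  assumes [measurable]: "u \<in> borel_measurable lborel"
    and fin: "emeasure lborel {y. l < \<bar>u y\<bar>} < \<infinity>"
  shows "measure lborel (ball x r)
         \<le> measure lborel (ball x r \<inter> {y. \<bar>u y\<bar> \<le> l}) + measure lborel {y. l < \<bar>u y\<bar>}"
proof -
  have "measure lborel (ball x r)
        = measure lborel ((ball x r \<inter> {y. \<bar>u y\<bar> \<le> l}) \<union> (ball x r - {y. \<bar>u y\<bar> \<le> l}))"
    by (simp add: Un_Diff_Int sup_commute)
  also have "\<dots> \<le> measure lborel (ball x r \<inter> {y. \<bar>u y\<bar> \<le> l}) + measure lborel (ball x r - {y. \<bar>u y\<bar> \<le> l})"
    by (rule measure_Un_le) measurable
  also have "measure lborel (ball x r - {y. \<bar>u y\<bar> \<le> l}) \<le> measure lborel {y. l < \<bar>u y\<bar>}"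
    using fin by (intro measure_mono_fmeasurable) (auto intro: fmeasurableI)
  finally show ?thesis
    by simp
qed

text \<open>
  The radius \<open>r\<close> is chosen so that \<open>ball x r\<close> has twice the measure of \<open>{\<bar>u\<bar> > \<lambda>/2}\<close>;
  hence at least half of the ball lies where \<open>\<bar>u\<bar> \<le> \<lambda>/2\<close>.\<close>
lemma level_set_measure_le:
  fixes u :: "'a::euclidean_space \<Rightarrow> real"
  assumes u[measurable]: "u \<in> borel_measurable lborel" and s: "0 < s"
    and fin: "\<And>l. l > 0 \<Longrightarrow> emeasure lborel {x. l < \<bar>u x\<bar>} < \<infinity>"
    and gfin: "gagliardo_nn s u < \<infinity>"
    and lam: "0 < lam"
  shows "measure lborel {x. lam < \<bar>u x\<bar>} \<le>
     (8 / measure lborel (ball (0::'a) 1)) * (2 / measure lborel (ball (0::'a) 1)) powr (2 * s / real DIM('a))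
     * gagliardo s u * lam powr (-2) * (measure lborel {x. lam / 2 < \<bar>u x\<bar>}) powr (2 * s / real DIM('a))"
proof -
  define d where "d = real DIM('a)"
  define \<omega> where "\<omega> = measure lborel (ball (0::'a) 1)"
  define \<gamma> where "\<gamma> = 2 * s / d"
  define m where "m l = measure lborel {x. l < \<bar>u x\<bar>}" for l
  define A where "A = gagliardo s u"
  define c0 where "c0 = (8 / \<omega>) * (2 / \<omega>) powr \<gamma>"
  have d: "d > 0"
    unfolding d_def by simp
  have \<omega>: "\<omega> > 0"
    unfolding \<omega>_def by (rule content_ball_pos) simp
  have A: "gagliardo_nn s u = ennreal A" "0 \<le> A"
    using gfin by (simp_all add: A_def gagliardo_def)
  have em: "emeasure lborel {x. l < \<bar>u x\<bar>} = ennreal (m l)" if "l > 0" for l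
    unfolding m_def using fin[OF that] by (simp add: emeasure_eq_ennreal_measure)
  have "m lam \<le> c0 * A * lam powr (-2) * m (lam/2) powr \<gamma>"
  proof (cases "m (lam/2) = 0")
    case True
    have "m lam \<le> m (lam/2)"
      unfolding m_def using lam fin[of "lam/2"] by (intro measure_mono_fmeasurable) (auto intro: fmeasurableI)
    then show ?thesis
      using True A \<omega> by (simp add: m_def c0_def)
  next
    case False
    define \<mu> where "\<mu> = m (lam/2)"
    have \<mu>: "\<mu> > 0"
      using False unfolding \<mu>_def m_def by (simp add: order_less_le)
    define r where "r = (2 * \<mu> / \<omega>) powr (1 / d)"
    have r: "r > 0"
      unfolding r_def using \<mu> \<omega> by simp
    have "r ^ DIM('a) = 2 * \<mu> / \<omega>"
      using r \<mu> \<omega> d by (simp add: r_def d_def powr_realpow[symmetric] powr_powr)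
    then have ball: "measure lborel (ball x r) = 2 * \<mu>" for x :: 'a
      using content_ball_conv_unit_ball[of r x] r \<omega> unfolding \<omega>_def by simp
    define c1 where "c1 = (lam / 2)\<^sup>2 / r powr (d + 2 * s)"
    have c1: "c1 > 0"
      unfolding c1_def using lam r by simp
    have density: "ennreal (c1 * \<mu>) \<le> gagliardo_density s u x" if "lam < \<bar>u x\<bar>" for x
    proof -
      have "\<mu> \<le> measure lborel (ball x r \<inter> {y. \<bar>u y\<bar> \<le> lam / 2})"
        using measure_ball_le_level_set[OF u fin, of "lam/2" x r] ball[of x] lam
        unfolding \<mu>_def m_def by simp
      then have "ennreal (c1 * \<mu>) \<le> ennreal (c1 * measure lborel (ball x r \<inter> {y. \<bar>u y\<bar> \<le> lam / 2}))"
        using c1 by (intro ennreal_leI mult_left_mono) auto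
      also have "\<dots> \<le> gagliardo_density s u x"
        using gagliardo_density_ge_ball[OF u _ lam that r] s unfolding c1_def d_def by simp
      finally show ?thesis .
    qed
    have "ennreal (c1 * \<mu> * m lam) = ennreal (c1 * \<mu>) * emeasure lborel {x. lam < \<bar>u x\<bar>}"
      using em[OF lam] c1 \<mu> by (simp add: ennreal_mult m_def)
    also have "\<dots> = (\<integral>\<^sup>+ x. ennreal (c1 * \<mu>) * indicator {x. lam < \<bar>u x\<bar>} x \<partial>lborel)"
      by (rule nn_integral_cmult_indicator[symmetric]) measurable
    also have "\<dots> \<le> gagliardo_nn s u"
      unfolding gagliardo_nn_eq_nn_integral_density
      by (intro nn_integral_mono) (auto simp: indicator_def density)
    finally have "c1 * \<mu> * m lam \<le> A"
      using A by simp
    then have "m lam \<le> A / (c1 * \<mu>)"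
      using c1 \<mu> by (simp add: field_simps)
    also have "A / (c1 * \<mu>) = c0 * A * lam powr (-2) * \<mu> powr \<gamma>"
    proof -
      have "r powr (d + 2 * s) = (2 * \<mu> / \<omega>) powr (1 + \<gamma>)"
        unfolding r_def \<gamma>_def using \<mu> \<omega> d by (simp add: powr_powr field_simps)
      also have "\<dots> = (2 * \<mu> / \<omega>) * ((2 / \<omega>) powr \<gamma> * \<mu> powr \<gamma>)"
        using \<mu> \<omega> powr_mult[of "2 / \<omega>" \<mu> \<gamma>] by (simp add: powr_add)
      finally have "r powr (d + 2 * s) = (2 * \<mu> / \<omega>) * ((2 / \<omega>) powr \<gamma> * \<mu> powr \<gamma>)" .
      then show ?thesis
        unfolding c1_def c0_def using \<mu> \<omega> lam
        by (simp add: powr_minus_divide powr_numeral field_simps power2_eq_square)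
    qed
    finally show ?thesis
      unfolding \<mu>_def .
  qed
  then show ?thesis
    unfolding m_def c0_def \<omega>_def \<gamma>_def d_def A_def by simp
qed

lemma geometric_sum_Suc: "(\<Sum>i<Suc n. \<gamma> ^ i) = 1 + \<gamma> * (\<Sum>i<n. \<gamma> ^ i :: real)"
  unfolding sum.lessThan_Suc_shift by (simp add: sum_distrib_left)

lemma level_set_iteration:
  fixes a c0 \<gamma> :: real
  assumes a: "0 \<le> a" and c0: "0 \<le> c0" and \<gamma>: "0 < \<gamma>"
  shows "\<exists>c\<ge>0. \<forall>(m::real \<Rightarrow> real) A. 0 < A \<longrightarrow> (\<forall>l. 0 \<le> m l)
           \<longrightarrow> (\<forall>l>0. m l \<le> a * l powr (-2))
           \<longrightarrow> (\<forall>l>0. m l \<le> c0 * A * l powr (-2) * m (l/2) powr \<gamma>)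
           \<longrightarrow> (\<forall>l>0. m l \<le> c * A powr (\<Sum>i<n. \<gamma> ^ i) * l powr (- (2 + 2 * \<gamma> * (\<Sum>i<n. \<gamma> ^ i))))"
proof (induction n)
  case 0
  show ?case
    using a by auto
next
  case (Suc n)
  then obtain c where c: "c \<ge> 0" and IH: "\<And>m A. 0 < A \<Longrightarrow> (\<forall>l. 0 \<le> m l)
           \<Longrightarrow> (\<forall>l>0. m l \<le> a * l powr (-2))
           \<Longrightarrow> (\<forall>l>0. m l \<le> c0 * A * l powr (-2) * m (l/2) powr \<gamma>)
           \<Longrightarrow> (\<forall>l>0. m l \<le> c * A powr (\<Sum>i<n. \<gamma> ^ i) * l powr (- (2 + 2 * \<gamma> * (\<Sum>i<n. \<gamma> ^ i))))"
    by blast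
  define e where "e = (\<Sum>i<n. \<gamma> ^ i)"
  define q where "q = 2 + 2 * \<gamma> * e"
  define c' where "c' = c0 * c powr \<gamma> * 2 powr (q * \<gamma>)"
  show ?case
  proof (rule exI[of _ c'], intro conjI allI impI)
    show "0 \<le> c'"
      unfolding c'_def using c0 by simp
    fix m :: "real \<Rightarrow> real" and A l :: real
    assume A: "0 < A" and m: "\<forall>l. 0 \<le> m l" and Cheb: "\<forall>l>0. m l \<le> a * l powr (-2)"
      and step: "\<forall>l>0. m l \<le> c0 * A * l powr (-2) * m (l/2) powr \<gamma>" and l: "0 < l"
    have "m l \<le> c0 * A * l powr (-2) * m (l/2) powr \<gamma>"
      using step l by auto
    also have "\<dots> \<le> c0 * A * l powr (-2) * (c * A powr e * (l/2) powr (- q)) powr \<gamma>"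
      using IH[OF A m Cheb step] l m \<gamma> c0 A
      unfolding e_def q_def by (intro mult_left_mono powr_mono2) auto
    also have "(c * A powr e * (l/2) powr (- q)) powr \<gamma>
             = c powr \<gamma> * A powr (e * \<gamma>) * (2 powr (q * \<gamma>) * l powr (- q * \<gamma>))"
      using c A l by (simp add: powr_mult powr_powr powr_divide powr_minus_divide divide_simps)
    also have "c0 * A * l powr (-2) * (c powr \<gamma> * A powr (e * \<gamma>) * (2 powr (q * \<gamma>) * l powr (- q * \<gamma>)))
             = c' * (A powr 1 * A powr (e * \<gamma>)) * (l powr (-2) * l powr (- q * \<gamma>))"
      unfolding c'_def using A by (simp add: ac_simps)
    also have "\<dots> = c' * A powr (\<Sum>i<Suc n. \<gamma> ^ i) * l powr (- (2 + 2 * \<gamma> * (\<Sum>i<Suc n. \<gamma> ^ i)))"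
    proof -
      have "A powr 1 * A powr (e * \<gamma>) = A powr (\<Sum>i<Suc n. \<gamma> ^ i)"
        unfolding geometric_sum_Suc e_def[symmetric] using powr_add[of A 1 "e * \<gamma>"] by (simp add: ac_simps)
      moreover have "l powr (-2) * l powr (- q * \<gamma>) = l powr (- (2 + 2 * \<gamma> * (\<Sum>i<Suc n. \<gamma> ^ i)))"
        unfolding geometric_sum_Suc e_def[symmetric] q_def by (simp add: powr_add[symmetric] algebra_simps)
      ultimately show ?thesis
        by simp
    qed
    finally show "m l \<le> c' * A powr (\<Sum>i<Suc n. \<gamma> ^ i) * l powr (- (2 + 2 * \<gamma> * (\<Sum>i<Suc n. \<gamma> ^ i)))" .
  qed
qed

lemma exists_geometric_sum_exponent_gt:
  fixes \<gamma> p :: real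
  assumes \<gamma>: "0 < \<gamma>" "\<gamma> < 1" and p: "p < 2 / (1 - \<gamma>)"
  shows "\<exists>n. 0 < (\<Sum>i<n. \<gamma> ^ i) \<and> p < 2 + 2 * \<gamma> * (\<Sum>i<n. \<gamma> ^ i)"
proof -
  have "(\<lambda>n. 2 * (\<Sum>i<n. \<gamma> ^ i)) \<longlonglongrightarrow> 2 * (1 / (1 - \<gamma>))"
    using geometric_sums[of \<gamma>] \<gamma> unfolding sums_def by (intro tendsto_mult) auto
  then have "eventually (\<lambda>n. p < 2 * (\<Sum>i<n. \<gamma> ^ i)) sequentially"
    using p by (intro order_tendstoD(1)) auto
  then obtain N where N: "\<And>n. N \<le> n \<Longrightarrow> p < 2 * (\<Sum>i<n. \<gamma> ^ i)"
    by (auto simp: eventually_sequentially)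
  have "0 < (\<Sum>i<Suc N. \<gamma> ^ i)"
    using \<gamma> by (intro sum_pos) auto
  moreover have "2 + 2 * \<gamma> * (\<Sum>i<Suc N. \<gamma> ^ i) = 2 * (\<Sum>i<Suc (Suc N). \<gamma> ^ i)"
    by (subst geometric_sum_Suc[where n = "Suc N"]) (simp add: algebra_simps)
  then have "p < 2 + 2 * \<gamma> * (\<Sum>i<Suc N. \<gamma> ^ i)"
    using N[of "Suc (Suc N)"] by simp
  ultimately show ?thesis
    by blast
qed

lemma dyadic_bracket:
  fixes t :: real
  assumes "1 < t"
  shows "\<exists>k::nat. 2 ^ k < t \<and> t \<le> 2 ^ (k + 1)"
proof -
  obtain n :: nat where n: "t < 2 ^ n"
    using real_arch_pow[of 2 t] by auto
  define N where "N = (LEAST n::nat. t \<le> 2 ^ n)"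
  have tN: "t \<le> 2 ^ N"
    unfolding N_def by (rule LeastI[of _ n]) (use n in simp)
  then obtain k where k: "N = Suc k"
    using assms by (cases N) auto
  have "\<not> t \<le> 2 ^ k"
    using not_less_Least[of k "\<lambda>n. t \<le> 2 ^ n"] k unfolding N_def by auto
  then show ?thesis
    using tN k by (intro exI[of _ k]) auto
qed

lemma powr_le_dyadic_layers:
  fixes y \<mu> p :: real
  assumes \<mu>: "0 < \<mu>" and p: "2 \<le> p"
  shows "ennreal (\<bar>y\<bar> powr p) \<le> ennreal (\<mu> powr (p - 2) * y\<^sup>2)
     + (\<Sum>k. ennreal ((2 ^ (k + 1) * \<mu>) powr p) * indicator {z. 2 ^ k * \<mu> < \<bar>z\<bar>} y)"
proof (cases "\<bar>y\<bar> \<le> \<mu>")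
  case True
  have "\<bar>y\<bar> powr p \<le> \<mu> powr (p - 2) * y\<^sup>2"
  proof (cases "y = 0")
    case False
    have "\<bar>y\<bar> powr p = \<bar>y\<bar> powr (p - 2) * y\<^sup>2"
      using False powr_add[of "\<bar>y\<bar>" "p - 2" 2] by (simp add: powr_numeral)
    also have "\<dots> \<le> \<mu> powr (p - 2) * y\<^sup>2"
      using True p by (intro mult_right_mono powr_mono2) auto
    finally show ?thesis .
  qed simp
  then show ?thesis
    by (simp add: add_increasing2)
next
  case False
  then have "1 < \<bar>y\<bar> / \<mu>"
    using \<mu> by simp
  then obtain k :: nat where "2 ^ k < \<bar>y\<bar> / \<mu>" "\<bar>y\<bar> / \<mu> \<le> 2 ^ (k + 1)"
    using dyadic_bracket by blast
  then have k: "2 ^ k * \<mu> < \<bar>y\<bar>" "\<bar>y\<bar> \<le> 2 ^ (k + 1) * \<mu>"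
    using \<mu> by (simp_all add: field_simps)
  define F where "F k = ennreal ((2 ^ (k + 1) * \<mu>) powr p) * indicator {z. 2 ^ k * \<mu> < \<bar>z\<bar>} y" for k
  have "ennreal (\<bar>y\<bar> powr p) \<le> ennreal ((2 ^ (k + 1) * \<mu>) powr p)"
    using k p by (intro ennreal_leI powr_mono2) auto
  also have "\<dots> = F k"
    using k by (simp add: F_def)
  also have "\<dots> \<le> suminf F"
    using sum_le_suminf[of F "{k}"] by simp
  finally show ?thesis
    unfolding F_def by (simp add: add_increasing)
qed

lemma nn_integral_powr_le_weak_type:
  fixes u :: "'a::euclidean_space \<Rightarrow> real"
  assumes [measurable]: "u \<in> borel_measurable lborel"
    and L2: "(\<integral>\<^sup>+ x. ennreal ((u x)\<^sup>2) \<partial>lborel) \<le> ennreal a"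
    and weak: "\<And>l. l > 0 \<Longrightarrow> emeasure lborel {x. l < \<bar>u x\<bar>} \<le> ennreal (K * l powr (- q))"
    and K: "0 \<le> K" and a: "0 \<le> a" and p: "2 \<le> p" "p < q" and \<mu>: "0 < \<mu>"
  shows "(\<integral>\<^sup>+ x. ennreal (\<bar>u x\<bar> powr p) \<partial>lborel)
     \<le> ennreal (\<mu> powr (p - 2) * a + 2 powr p * K * \<mu> powr (p - q) / (1 - 2 powr (p - q)))"
proof -
  define r where "r = 2 powr (p - q)"
  have r: "0 < r" "r < 1"
    unfolding r_def using p powr_less_mono[of "p - q" 0 2] by auto
  have layer: "(2 ^ (k + 1) * \<mu>) powr p * (K * (2 ^ k * \<mu>) powr (- q))
             = 2 powr p * K * \<mu> powr (p - q) * r ^ k" for k :: nat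
  proof -
    have "(2 ^ (k + 1) * \<mu>) powr p = 2 powr p * (2 powr p) ^ k * \<mu> powr p"
      using \<mu> by (simp add: powr_mult powr_realpow[symmetric] powr_powr powr_add[symmetric]
          powr_power algebra_simps)
    moreover have "(2 ^ k * \<mu>) powr (- q) = (2 powr (- q)) ^ k * \<mu> powr (- q)"
      using \<mu> by (simp add: powr_mult powr_realpow[symmetric] powr_powr powr_power algebra_simps)
    moreover have "r ^ k = (2 powr p) ^ k * (2 powr (- q)) ^ k"
      by (simp add: r_def powr_add[symmetric] power_mult_distrib[symmetric])
    moreover have "\<mu> powr (p - q) = \<mu> powr p * \<mu> powr (- q)"
      by (simp add: powr_add[symmetric])
    ultimately show ?thesis
      by (simp add: ac_simps)
  qed
  have "(\<integral>\<^sup>+ x. ennreal (\<bar>u x\<bar> powr p) \<partial>lborel)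
     \<le> (\<integral>\<^sup>+ x. ennreal (\<mu> powr (p - 2) * (u x)\<^sup>2)
          + (\<Sum>k. ennreal ((2 ^ (k + 1) * \<mu>) powr p) * indicator {z. 2 ^ k * \<mu> < \<bar>u z\<bar>} x) \<partial>lborel)"
    using powr_le_dyadic_layers[OF \<mu> p(1)] by (intro nn_integral_mono) (simp add: indicator_def)
  also have "\<dots> = ennreal (\<mu> powr (p - 2)) * (\<integral>\<^sup>+ x. ennreal ((u x)\<^sup>2) \<partial>lborel)
     + (\<Sum>k. ennreal ((2 ^ (k + 1) * \<mu>) powr p) * emeasure lborel {z. 2 ^ k * \<mu> < \<bar>u z\<bar>})"
    by (subst nn_integral_add)
       (auto simp: nn_integral_suminf nn_integral_cmult nn_integral_cmult_indicator ennreal_mult)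
  also have "\<dots> \<le> ennreal (\<mu> powr (p - 2)) * ennreal a
     + (\<Sum>k. ennreal (2 powr p * K * \<mu> powr (p - q) * r ^ k))"
  proof (intro add_mono mult_left_mono suminf_le)
    fix k :: nat
    have "ennreal ((2 ^ (k + 1) * \<mu>) powr p) * emeasure lborel {z. 2 ^ k * \<mu> < \<bar>u z\<bar>}
        \<le> ennreal ((2 ^ (k + 1) * \<mu>) powr p) * ennreal (K * (2 ^ k * \<mu>) powr (- q))"
      using \<mu> by (intro mult_left_mono weak) auto
    also have "\<dots> = ennreal ((2 ^ (k + 1) * \<mu>) powr p * (K * (2 ^ k * \<mu>) powr (- q)))"
      using K by (simp add: ennreal_mult)
    also have "\<dots> = ennreal (2 powr p * K * \<mu> powr (p - q) * r ^ k)"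
      by (simp only: layer)
    finally show "ennreal ((2 ^ (k + 1) * \<mu>) powr p) * emeasure lborel {z. 2 ^ k * \<mu> < \<bar>u z\<bar>}
        \<le> ennreal (2 powr p * K * \<mu> powr (p - q) * r ^ k)" .
  qed (use L2 in auto)
  also have "(\<Sum>k. ennreal (2 powr p * K * \<mu> powr (p - q) * r ^ k))
           = ennreal (2 powr p * K * \<mu> powr (p - q) / (1 - r))"
  proof -
    have "(\<Sum>k. ennreal (2 powr p * K * \<mu> powr (p - q) * r ^ k))
        = ennreal (\<Sum>k. 2 powr p * K * \<mu> powr (p - q) * r ^ k)"
      using r K by (intro suminf_ennreal2) (auto intro!: summable_mult summable_geometric)
    also have "(\<Sum>k. 2 powr p * K * \<mu> powr (p - q) * r ^ k) = 2 powr p * K * \<mu> powr (p - q) * (1 / (1 - r))"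
      using r by (subst suminf_mult) (auto simp: suminf_geometric)
    finally show ?thesis
      by simp
  qed
  also have "ennreal (\<mu> powr (p - 2)) * ennreal a + ennreal (2 powr p * K * \<mu> powr (p - q) / (1 - r))
      = ennreal (\<mu> powr (p - 2) * a + 2 powr p * K * \<mu> powr (p - q) / (1 - r))"
    using a K r by (simp add: ennreal_mult ennreal_plus)
  finally show ?thesis
    unfolding r_def .
qed

lemma AE_eq_0_of_level_sets_null:
  fixes u :: "'a::euclidean_space \<Rightarrow> real"
  assumes [measurable]: "u \<in> borel_measurable lborel"
    and null: "\<And>l. l > 0 \<Longrightarrow> emeasure lborel {x. l < \<bar>u x\<bar>} = 0"
  shows "AE x in lborel. u x = 0"
proof (rule AE_I')
  let ?N = "\<Union>i::nat. {x. 1 / (real i + 1) < \<bar>u x\<bar>}"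
  have "emeasure lborel ?N = 0"
    by (rule emeasure_UN_eq_0) (auto intro!: null)
  then show "?N \<in> null_sets lborel"
    by (simp add: null_sets_def)
  show "{x \<in> space lborel. u x \<noteq> 0} \<subseteq> ?N"
  proof
    fix x
    assume "x \<in> {x \<in> space lborel. u x \<noteq> 0}"
    then have "0 < \<bar>u x\<bar>"
      by simp
    then obtain i :: nat where "1 / (real i + 1) < \<bar>u x\<bar>"
      by (metis add.commute nat_approx_posE of_nat_Suc)
    then show "x \<in> ?N"
      by auto
  qed
qed

lemma AE_eq_0_of_gagliardo_eq_0:
  fixes u :: "'a::euclidean_space \<Rightarrow> real"
  assumes u[measurable]: "u \<in> borel_measurable lborel"
    and L2: "(\<integral>\<^sup>+ x. ennreal ((u x)\<^sup>2) \<partial>lborel) \<le> ennreal a"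
    and s: "0 < s" and gfin: "gagliardo_nn s u < \<infinity>" and zero: "gagliardo s u = 0"
  shows "AE x in lborel. u x = 0"
proof (rule AE_eq_0_of_level_sets_null[OF u])
  fix l :: real
  assume l: "0 < l"
  have fin: "emeasure lborel {x. l < \<bar>u x\<bar>} < \<infinity>" if "0 < l" for l
    using emeasure_level_set_le_L2[OF u L2 that] by (simp add: le_less_trans)
  have "emeasure lborel {x. l < \<bar>u x\<bar>} = ennreal (measure lborel {x. l < \<bar>u x\<bar>})"
    using fin[OF l] by (intro emeasure_eq_ennreal_measure) simp
  moreover have "measure lborel {x. l < \<bar>u x\<bar>} \<le> 0"
    using level_set_measure_le[OF u s fin gfin l] zero by simp
  ultimately show "emeasure lborel {x. l < \<bar>u x\<bar>} = 0"
    by (simp add: ennreal_eq_0_iff)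
qed

lemma level_sets_weak_type_bound:
  fixes s a :: real
  defines "\<gamma> \<equiv> 2 * s / real DIM('a::euclidean_space)"
  assumes s: "0 < s" and a: "0 \<le> a"
  shows "\<exists>c\<ge>0. \<forall>u::'a \<Rightarrow> real. u \<in> borel_measurable lborel
           \<longrightarrow> (\<integral>\<^sup>+ x. ennreal ((u x)\<^sup>2) \<partial>lborel) \<le> ennreal a
           \<longrightarrow> gagliardo_nn s u < \<infinity>
           \<longrightarrow> (\<forall>l>0. emeasure lborel {x. l < \<bar>u x\<bar>}
                 \<le> ennreal (c * gagliardo s u powr (\<Sum>i<n. \<gamma> ^ i) * l powr (- (2 + 2 * \<gamma> * (\<Sum>i<n. \<gamma> ^ i)))))"
proof -
  define \<omega> where "\<omega> = measure lborel (ball (0::'a) 1)"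
  define c0 where "c0 = (8 / \<omega>) * (2 / \<omega>) powr \<gamma>"
  have "\<omega> > 0"
    unfolding \<omega>_def by (rule content_ball_pos) simp
  then have c0: "0 \<le> c0"
    unfolding c0_def by simp
  have \<gamma>: "0 < \<gamma>"
    unfolding \<gamma>_def using s by simp
  obtain c where c: "c \<ge> 0" and iteration: "\<And>m A. 0 < A \<Longrightarrow> (\<forall>l. 0 \<le> m l)
           \<Longrightarrow> (\<forall>l>0. m l \<le> a * l powr (-2))
           \<Longrightarrow> (\<forall>l>0. m l \<le> c0 * A * l powr (-2) * m (l/2) powr \<gamma>)
           \<Longrightarrow> (\<forall>l>0. m l \<le> c * A powr (\<Sum>i<n. \<gamma> ^ i) * l powr (- (2 + 2 * \<gamma> * (\<Sum>i<n. \<gamma> ^ i))))"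
    using level_set_iteration[OF a c0 \<gamma>, of n] by blast
  show ?thesis
  proof (intro exI[of _ c] conjI allI impI c)
    fix u :: "'a \<Rightarrow> real" and l :: real
    assume u[measurable]: "u \<in> borel_measurable lborel"
      and L2: "(\<integral>\<^sup>+ x. ennreal ((u x)\<^sup>2) \<partial>lborel) \<le> ennreal a"
      and gfin: "gagliardo_nn s u < \<infinity>" and l: "0 < l"
    define A where "A = gagliardo s u"
    define m where "m l = measure lborel {x. l < \<bar>u x\<bar>}" for l
    have fin: "emeasure lborel {x. l < \<bar>u x\<bar>} < \<infinity>" if "0 < l" for l
      using emeasure_level_set_le_L2[OF u L2 that] by (simp add: le_less_trans)
    have em: "emeasure lborel {x. l < \<bar>u x\<bar>} = ennreal (m l)" if "0 < l" for l
      unfolding m_def using fin[OF that] by (intro emeasure_eq_ennreal_measure) simp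
    have m: "\<forall>l. 0 \<le> m l"
      unfolding m_def by simp
    have Chebyshev: "\<forall>l>0. m l \<le> a * l powr (-2)"
    proof (intro allI impI)
      fix l :: real
      assume "0 < l"
      then have "ennreal (m l) \<le> ennreal (a * l powr (-2))"
        using emeasure_level_set_le_L2[OF u L2] em by simp
      then show "m l \<le> a * l powr (-2)"
        using a by (simp add: ennreal_le_iff)
    qed
    have step: "\<forall>l>0. m l \<le> c0 * A * l powr (-2) * m (l/2) powr \<gamma>"
      using level_set_measure_le[OF u s fin gfin]
      unfolding m_def c0_def \<omega>_def \<gamma>_def A_def by auto
    show "emeasure lborel {x. l < \<bar>u x\<bar>}
          \<le> ennreal (c * gagliardo s u powr (\<Sum>i<n. \<gamma> ^ i) * l powr (- (2 + 2 * \<gamma> * (\<Sum>i<n. \<gamma> ^ i))))"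
    proof (cases "A = 0")
      case True
      then have "m l \<le> 0"
        using step l by simp
      then have "emeasure lborel {x. l < \<bar>u x\<bar>} = 0"
        using em[OF l] m by (metis antisym ennreal_0)
      then show ?thesis
        by simp
    next
      case False
      then have "0 < A"
        using gagliardo_nonneg[of s u] unfolding A_def by simp
      then show ?thesis
        using iteration[OF _ m Chebyshev step] em[OF l] l unfolding A_def by (simp add: ennreal_leI)
    qed
  qed
qed

theorem fractional_Gagliardo_Nirenberg:
  fixes s p a :: real
  assumes s: "0 < s" "2 * s < real DIM('a::euclidean_space)"
    and p: "2 < p" "p < 2 * real DIM('a) / (real DIM('a) - 2 * s)" and a: "0 \<le> a"
  shows "\<exists>C\<ge>0. \<forall>u::'a \<Rightarrow> real. u \<in> borel_measurable lborel
           \<longrightarrow> (\<integral>\<^sup>+ x. ennreal ((u x)\<^sup>2) \<partial>lborel) \<le> ennreal a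
           \<longrightarrow> gagliardo_nn s u < \<infinity>
           \<longrightarrow> (\<integral>\<^sup>+ x. ennreal (\<bar>u x\<bar> powr p) \<partial>lborel)
                 \<le> ennreal (C * gagliardo s u powr (real DIM('a) * (p - 2) / (4 * s)))"
proof -
  define d where "d = real DIM('a)"
  define \<gamma> where "\<gamma> = 2 * s / d"
  have d: "0 < d"
    unfolding d_def by simp
  have \<gamma>: "0 < \<gamma>" "\<gamma> < 1"
    using s d unfolding \<gamma>_def d_def by simp_all
  have "p < 2 / (1 - \<gamma>)"
    using p s d unfolding \<gamma>_def d_def by (simp add: field_simps)
  then obtain n where e: "0 < (\<Sum>i<n. \<gamma> ^ i)" and pq: "p < 2 + 2 * \<gamma> * (\<Sum>i<n. \<gamma> ^ i)"
    using exists_geometric_sum_exponent_gt[OF \<gamma>] by blast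
  define e where "e = (\<Sum>i<n. \<gamma> ^ i)"
  define q where "q = 2 + 2 * \<gamma> * e"
  obtain c where c: "c \<ge> 0" and weak: "\<And>u :: 'a \<Rightarrow> real. u \<in> borel_measurable lborel
           \<Longrightarrow> (\<integral>\<^sup>+ x. ennreal ((u x)\<^sup>2) \<partial>lborel) \<le> ennreal a
           \<Longrightarrow> gagliardo_nn s u < \<infinity>
           \<Longrightarrow> (\<forall>l>0. emeasure lborel {x. l < \<bar>u x\<bar>} \<le> ennreal (c * gagliardo s u powr e * l powr (- q)))"
    using level_sets_weak_type_bound[OF s(1) a, of n] unfolding e_def q_def \<gamma>_def d_def by blast
  define r where "r = 2 powr (p - q)"
  have r: "r < 1"
    unfolding r_def using pq powr_less_mono[of "p - q" 0 2] unfolding q_def e_def by auto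
  define C where "C = a + 2 powr p * c / (1 - r)"
  define \<theta> where "\<theta> = (p - 2) / (2 * \<gamma>)"
  have \<theta>: "real DIM('a) * (p - 2) / (4 * s) = \<theta>"
    unfolding \<theta>_def \<gamma>_def d_def using s by (simp add: field_simps)
  show ?thesis
  proof (intro exI[of _ C] conjI allI impI)
    show "0 \<le> C"
      unfolding C_def using a c r by simp
    fix u :: "'a \<Rightarrow> real"
    assume u[measurable]: "u \<in> borel_measurable lborel"
      and L2: "(\<integral>\<^sup>+ x. ennreal ((u x)\<^sup>2) \<partial>lborel) \<le> ennreal a"
      and gfin: "gagliardo_nn s u < \<infinity>"
    define A where "A = gagliardo s u"
    have weak_u: "\<And>l. 0 < l \<Longrightarrow> emeasure lborel {x. l < \<bar>u x\<bar>} \<le> ennreal (c * A powr e * l powr (- q))"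
      using weak[OF u L2 gfin] unfolding A_def by blast
    show "(\<integral>\<^sup>+ x. ennreal (\<bar>u x\<bar> powr p) \<partial>lborel) \<le> ennreal (C * gagliardo s u powr (real DIM('a) * (p - 2) / (4 * s)))"
    proof (cases "A = 0")
      case True
      then have "AE x in lborel. u x = 0"
        using AE_eq_0_of_gagliardo_eq_0[OF u L2 s(1) gfin] unfolding A_def by simp
      then have "AE x in lborel. ennreal (\<bar>u x\<bar> powr p) = 0"
        by eventually_elim simp
      then have "(\<integral>\<^sup>+ x. ennreal (\<bar>u x\<bar> powr p) \<partial>lborel) = (\<integral>\<^sup>+ x. 0 \<partial>(lborel :: 'a measure))"
        by (rule nn_integral_cong_AE)
      then show ?thesis
        by simp
    next
      case False
      then have A: "0 < A"
        using gagliardo_nonneg[of s u] unfolding A_def by simp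
      define \<mu> where "\<mu> = A powr (1 / (2 * \<gamma>))"
      have "(\<integral>\<^sup>+ x. ennreal (\<bar>u x\<bar> powr p) \<partial>lborel)
          \<le> ennreal (\<mu> powr (p - 2) * a + 2 powr p * (c * A powr e) * \<mu> powr (p - q) / (1 - 2 powr (p - q)))"
        using A c a p pq
        by (intro nn_integral_powr_le_weak_type[OF u L2 weak_u]) (auto simp: \<mu>_def q_def e_def)
      also have "\<mu> powr (p - 2) * a + 2 powr p * (c * A powr e) * \<mu> powr (p - q) / (1 - 2 powr (p - q))
               = C * A powr \<theta>"
      proof -
        have "\<mu> powr (p - 2) = A powr \<theta>"
          unfolding \<mu>_def \<theta>_def using A by (simp add: powr_powr)
        moreover have "A powr e * \<mu> powr (p - q) = A powr \<theta>"
          unfolding \<mu>_def \<theta>_def q_def using A \<gamma> by (simp add: powr_powr powr_add[symmetric] field_simps)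
        ultimately show ?thesis
          unfolding C_def r_def by (simp add: algebra_simps)
      qed
      finally show ?thesis
        unfolding \<theta> A_def .
    qed
  qed
qed

section \<open>Scaling of the Gagliardo seminorm under \<open>t * u\<close>\<close>

lemma nn_integral_lborel_scaleR:
  fixes f :: "'a::euclidean_space \<Rightarrow> ennreal" and c :: real
  assumes [measurable]: "f \<in> borel_measurable borel" and c: "0 < c"
  shows "(\<integral>\<^sup>+ x. f (c *\<^sub>R x) \<partial>lborel) = ennreal (1 / c ^ DIM('a)) * integral\<^sup>N lborel f"
proof -
  have "integral\<^sup>N lborel f
        = integral\<^sup>N (density (distr lborel borel (\<lambda>x::'a. 0 + c *\<^sub>R x)) (\<lambda>_. \<bar>c\<bar> ^ DIM('a))) f"
    using lborel_affine[of c "0::'a"] c by simp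
  also have "\<dots> = ennreal (c ^ DIM('a)) * (\<integral>\<^sup>+ x. f (c *\<^sub>R x) \<partial>lborel)"
    using c by (simp add: nn_integral_density nn_integral_distr nn_integral_cmult)
  finally have "integral\<^sup>N lborel f = ennreal (c ^ DIM('a)) * (\<integral>\<^sup>+ x. f (c *\<^sub>R x) \<partial>lborel)" .
  moreover have "ennreal (1 / c ^ DIM('a)) * ennreal (c ^ DIM('a)) = 1"
    using c by (simp flip: ennreal_mult)
  ultimately show ?thesis
    by (simp add: mult.assoc[symmetric])
qed

lemma gagliardo_density_dil:
  fixes u :: "'a::euclidean_space \<Rightarrow> real"
  assumes [measurable]: "u \<in> borel_measurable lborel" and t: "0 < t"
  shows "gagliardo_density s (dil t u) x
         = ennreal (t powr (real DIM('a) + 2 * s)) * gagliardo_density s u (t *\<^sub>R x)"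
proof -
  define d where "d = real DIM('a)"
  define k where "k = d + 2 * s"
  define F where "F z = ennreal ((t powr (d/2) * u (t *\<^sub>R x) - t powr (d/2) * u z)\<^sup>2
                                  / (norm ((1/t) *\<^sub>R (t *\<^sub>R x - z))) powr k)" for z
  have [measurable]: "F \<in> borel_measurable borel"
    unfolding F_def by measurable
  have "(1/t) *\<^sub>R (t *\<^sub>R x - t *\<^sub>R y) = x - y" for y :: 'a
    using t by (simp add: scaleR_diff_right)
  then have "gagliardo_density s (dil t u) x = (\<integral>\<^sup>+ y. F (t *\<^sub>R y) \<partial>lborel)"
    unfolding gagliardo_density_def F_def dil_def d_def k_def by simp
  also have "\<dots> = ennreal (1 / t ^ DIM('a)) * integral\<^sup>N lborel F"
    using t by (rule nn_integral_lborel_scaleR[rotated])  measurable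
  also have "integral\<^sup>N lborel F
      = (\<integral>\<^sup>+ z. ennreal (t powr (d + k)) * ennreal ((u (t *\<^sub>R x) - u z)\<^sup>2 / (norm (t *\<^sub>R x - z)) powr k) \<partial>lborel)"
  proof (intro nn_integral_cong)
    fix z :: 'a
    have scaling: "(t powr (d/2) * v - t powr (d/2) * w)\<^sup>2 / ((1/t) * N) powr k
                   = t powr (d + k) * ((v - w)\<^sup>2 / N powr k)" if "0 \<le> N" for v w N :: real
    proof -
      have "(t powr (d/2))\<^sup>2 = t powr d"
        using t by (simp add: power2_eq_square powr_add[symmetric])
      then have "(t powr (d/2) * v - t powr (d/2) * w)\<^sup>2 = t powr d * (v - w)\<^sup>2"
        by (simp add: power2_eq_square algebra_simps)
      moreover have "((1/t) * N) powr k = N powr k / t powr k"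
        using t that by (simp add: powr_mult powr_divide)
      ultimately show ?thesis
        using t that by (cases "N = 0") (simp_all add: powr_add field_simps)
    qed
    have "norm ((1/t) *\<^sub>R (t *\<^sub>R x - z)) = (1/t) * norm (t *\<^sub>R x - z)"
      using t by simp
    then show "F z = ennreal (t powr (d + k)) * ennreal ((u (t *\<^sub>R x) - u z)\<^sup>2 / (norm (t *\<^sub>R x - z)) powr k)"
      unfolding F_def using scaling[OF norm_ge_zero] t by (simp flip: ennreal_mult)
  qed
  also have "\<dots> = ennreal (t powr (d + k)) * gagliardo_density s u (t *\<^sub>R x)"
    unfolding gagliardo_density_def k_def d_def by (subst nn_integral_cmult) auto
  also have "ennreal (1 / t ^ DIM('a)) * (ennreal (t powr (d + k)) * gagliardo_density s u (t *\<^sub>R x))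
           = ennreal (t powr k) * gagliardo_density s u (t *\<^sub>R x)"
    using t by (simp add: mult.assoc[symmetric] d_def powr_add powr_realpow flip: ennreal_mult)
  finally show ?thesis
    unfolding k_def d_def .
qed

lemma gagliardo_nn_dil:
  fixes u :: "'a::euclidean_space \<Rightarrow> real"
  assumes [measurable]: "u \<in> borel_measurable lborel" and t: "0 < t"
  shows "gagliardo_nn s (dil t u) = ennreal (t powr (2 * s)) * gagliardo_nn s u"
proof -
  have [measurable]: "gagliardo_density s u \<in> borel_measurable borel"
    by (rule borel_measurable_gagliardo_density) measurable
  have "gagliardo_nn s (dil t u)
        = ennreal (t powr (real DIM('a) + 2 * s)) * (\<integral>\<^sup>+ x. gagliardo_density s u (t *\<^sub>R x) \<partial>lborel)"
    unfolding gagliardo_nn_eq_nn_integral_density gagliardo_density_dil[OF assms(1) t]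
    by (subst nn_integral_cmult) auto
  also have "\<dots> = ennreal (t powr (real DIM('a) + 2 * s)) * (ennreal (1 / t ^ DIM('a)) * gagliardo_nn s u)"
    unfolding gagliardo_nn_eq_nn_integral_density using t by (subst nn_integral_lborel_scaleR) auto
  also have "\<dots> = ennreal (t powr (2 * s)) * gagliardo_nn s u"
    using t by (simp add: mult.assoc[symmetric] powr_add powr_realpow flip: ennreal_mult)
  finally show ?thesis .
qed

lemma gagliardo_dil:
  fixes u :: "'a::euclidean_space \<Rightarrow> real"
  assumes "u \<in> borel_measurable lborel" and "0 < t"
  shows "gagliardo s (dil t u) = t powr (2 * s) * gagliardo s u"
  using assms by (simp add: gagliardo_def gagliardo_nn_dil enn2real_mult)

section \<open>A lower bound on the Pohozaev manifold\<close>

lemma nn_integral_square_eq_L2sq: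
  fixes u :: "'a::euclidean_space \<Rightarrow> real"
  assumes "integrable lborel (\<lambda>x. (u x)\<^sup>2)"
  shows "(\<integral>\<^sup>+ x. ennreal ((u x)\<^sup>2) \<partial>lborel) = ennreal (L2sq u)"
  using assms unfolding L2sq_def by (subst nn_integral_eq_integral) auto

lemma integral_le_of_nn_integral_le:
  fixes f :: "'a::euclidean_space \<Rightarrow> real"
  assumes [measurable]: "f \<in> borel_measurable lborel" and "\<And>x. 0 \<le> f x"
    and le: "(\<integral>\<^sup>+ x. ennreal (f x) \<partial>lborel) \<le> ennreal X" and X: "0 \<le> X"
  shows "integrable lborel f" and "(\<integral>x. f x \<partial>lborel) \<le> X"
proof -
  show "integrable lborel f"
    using le assms(2) by (intro integrableI_bounded) (auto simp: le_less_trans)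
  have "(\<integral>x. f x \<partial>lborel) = enn2real (\<integral>\<^sup>+ x. ennreal (f x) \<partial>lborel)"
    using assms(2) by (intro integral_eq_nn_integral) auto
  also have "\<dots> \<le> X"
    using le X by (metis enn2real_ennreal enn2real_mono ennreal_neq_top top.not_eq_extremum)
  finally show "(\<integral>x. f x \<partial>lborel) \<le> X" .
qed

context AR_nonlinearity
begin

lemma integral_Gtil_le_gagliardo:
  fixes s a :: real
  defines "d \<equiv> real DIM('a::euclidean_space)"
  assumes s: "0 < s" "2 * s < d" and \<alpha>: "2 < \<alpha>" and \<beta>: "\<beta> < 2 * d / (d - 2 * s)" and a: "0 \<le> a"
  shows "\<exists>C\<ge>0. \<forall>u::'a \<Rightarrow> real. u \<in> borel_measurable lborel
           \<longrightarrow> (\<integral>\<^sup>+ x. ennreal ((u x)\<^sup>2) \<partial>lborel) \<le> ennreal a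
           \<longrightarrow> gagliardo_nn s u < \<infinity>
           \<longrightarrow> (\<integral>x. Gtil g (u x) \<partial>lborel)
                 \<le> C * (gagliardo s u powr (d * (\<alpha> - 2) / (4 * s)) + gagliardo s u powr (d * (\<beta> - 2) / (4 * s)))"
proof -
  have \<alpha>': "\<alpha> < 2 * d / (d - 2 * s)"
    using \<beta> exponents by simp
  obtain C\<alpha> where C\<alpha>: "C\<alpha> \<ge> 0" "\<And>u::'a \<Rightarrow> real. u \<in> borel_measurable lborel
           \<Longrightarrow> (\<integral>\<^sup>+ x. ennreal ((u x)\<^sup>2) \<partial>lborel) \<le> ennreal a \<Longrightarrow> gagliardo_nn s u < \<infinity>
           \<Longrightarrow> (\<integral>\<^sup>+ x. ennreal (\<bar>u x\<bar> powr \<alpha>) \<partial>lborel) \<le> ennreal (C\<alpha> * gagliardo s u powr (d * (\<alpha> - 2) / (4 * s)))"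
    using fractional_Gagliardo_Nirenberg[OF s[unfolded d_def] \<alpha> \<alpha>'[unfolded d_def] a] unfolding d_def by blast
  obtain C\<beta> where C\<beta>: "C\<beta> \<ge> 0" "\<And>u::'a \<Rightarrow> real. u \<in> borel_measurable lborel
           \<Longrightarrow> (\<integral>\<^sup>+ x. ennreal ((u x)\<^sup>2) \<partial>lborel) \<le> ennreal a \<Longrightarrow> gagliardo_nn s u < \<infinity>
           \<Longrightarrow> (\<integral>\<^sup>+ x. ennreal (\<bar>u x\<bar> powr \<beta>) \<partial>lborel) \<le> ennreal (C\<beta> * gagliardo s u powr (d * (\<beta> - 2) / (4 * s)))"
    using fractional_Gagliardo_Nirenberg[OF s[unfolded d_def] _ \<beta>[unfolded d_def] a] \<alpha> exponents
    unfolding d_def by fastforce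
  define K where "K = (\<beta> / 2 - 1) * (Gprim g 1 + Gprim g (-1))"
  have K: "0 \<le> K"
    unfolding K_def using \<alpha> exponents Gprim_nonneg[of 1] Gprim_nonneg[of "-1"] by simp
  show ?thesis
  proof (intro exI[of _ "K * max C\<alpha> C\<beta>"] conjI allI impI)
    show "0 \<le> K * max C\<alpha> C\<beta>"
      using K C\<alpha> by simp
    fix u :: "'a \<Rightarrow> real"
    assume u[measurable]: "u \<in> borel_measurable lborel"
      and L2: "(\<integral>\<^sup>+ x. ennreal ((u x)\<^sup>2) \<partial>lborel) \<le> ennreal a" and gfin: "gagliardo_nn s u < \<infinity>"
    define A where "A = gagliardo s u"
    have int\<alpha>: "integrable lborel (\<lambda>x. \<bar>u x\<bar> powr \<alpha>)"
      and le\<alpha>: "(\<integral>x. \<bar>u x\<bar> powr \<alpha> \<partial>lborel) \<le> C\<alpha> * A powr (d * (\<alpha> - 2) / (4 * s))"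
      using integral_le_of_nn_integral_le[OF _ _ C\<alpha>(2)[OF u L2 gfin]] C\<alpha>(1) unfolding A_def by auto
    have int\<beta>: "integrable lborel (\<lambda>x. \<bar>u x\<bar> powr \<beta>)"
      and le\<beta>: "(\<integral>x. \<bar>u x\<bar> powr \<beta> \<partial>lborel) \<le> C\<beta> * A powr (d * (\<beta> - 2) / (4 * s))"
      using integral_le_of_nn_integral_le[OF _ _ C\<beta>(2)[OF u L2 gfin]] C\<beta>(1) unfolding A_def by auto
    have "(\<integral>x. Gtil g (u x) \<partial>lborel) \<le> (\<integral>x. K * (\<bar>u x\<bar> powr \<alpha> + \<bar>u x\<bar> powr \<beta>) \<partial>lborel)"
      using int\<alpha> int\<beta> K Gtil_le_powr[of "u _"] \<alpha> exponents
      by (intro integral_mono') (auto simp: K_def)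
    also have "\<dots> = K * ((\<integral>x. \<bar>u x\<bar> powr \<alpha> \<partial>lborel) + (\<integral>x. \<bar>u x\<bar> powr \<beta> \<partial>lborel))"
      using int\<alpha> int\<beta> by simp
    also have "\<dots> \<le> K * (C\<alpha> * A powr (d * (\<alpha> - 2) / (4 * s)) + C\<beta> * A powr (d * (\<beta> - 2) / (4 * s)))"
      using le\<alpha> le\<beta> K by (intro mult_left_mono) auto
    also have "\<dots> \<le> K * max C\<alpha> C\<beta> * (A powr (d * (\<alpha> - 2) / (4 * s)) + A powr (d * (\<beta> - 2) / (4 * s)))"
      using K by (simp add: mult.assoc distrib_left mult_left_mono add_mono mult_right_mono)
    finally show "(\<integral>x. Gtil g (u x) \<partial>lborel)
        \<le> K * max C\<alpha> C\<beta> * (gagliardo s u powr (d * (\<alpha> - 2) / (4 * s)) + gagliardo s u powr (d * (\<beta> - 2) / (4 * s)))"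
      unfolding A_def .
  qed
qed

end

lemma Pohozaev_inequality:
  fixes u :: "'a::euclidean_space \<Rightarrow> real"
  assumes P: "u \<in> P_set s1 s2 gradV g a" and s: "s1 \<le> s2"
    and V: "\<bar>\<integral>x. 1/2 * (gradV x \<bullet> x) * (u x)\<^sup>2 \<partial>lborel\<bar> \<le> \<sigma>2 * (gagliardo s1 u + gagliardo s2 u)"
  shows "(s1 - \<sigma>2) * (gagliardo s1 u + gagliardo s2 u)
         \<le> real DIM('a) * (\<integral>x. Gtil g (u x) \<partial>lborel)"
proof -
  have "s1 * (gagliardo s1 u + gagliardo s2 u) \<le> s1 * gagliardo s1 u + s2 * gagliardo s2 u"
    using s gagliardo_nonneg[of s2 u] by (simp add: distrib_left mult_right_mono)
  also have "\<dots> = (\<integral>x. 1/2 * (gradV x \<bullet> x) * (u x)\<^sup>2 \<partial>lborel) + real DIM('a) * (\<integral>x. Gtil g (u x) \<partial>lborel)"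
    using P by (simp add: P_set_def Pfun_def mult.assoc)
  finally show ?thesis
    using V by (simp add: algebra_simps)
qed

lemma lower_bound_of_superlinear_bound:
  fixes c L \<theta> \<theta>' A S :: real
  assumes c: "0 < c" and L: "0 \<le> L" and \<theta>: "1 < \<theta>" "\<theta> \<le> \<theta>'"
    and A: "0 \<le> A" "A \<le> S" and S: "0 < S"
    and bound: "c * S \<le> L * (A powr \<theta> + A powr \<theta>')"
  shows "min 1 ((c / (2 * L + 1)) powr (1 / (\<theta> - 1))) \<le> S"
proof (cases "S < 1")
  case True
  have "A powr \<theta>' \<le> A powr \<theta>"
    using A True \<theta> by (intro powr_mono') auto
  moreover have "A powr \<theta> \<le> S powr \<theta>"
    using A \<theta> by (intro powr_mono2) auto
  ultimately have "A powr \<theta> + A powr \<theta>' \<le> 2 * S powr \<theta>"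
    by simp
  then have "L * (A powr \<theta> + A powr \<theta>') \<le> L * (2 * S powr \<theta>)"
    using L by (rule mult_left_mono)
  also have "\<dots> \<le> (2 * L + 1) * S powr \<theta>"
    by (simp add: algebra_simps)
  finally have "c * S \<le> (2 * L + 1) * S powr \<theta>"
    by (rule order_trans[OF bound])
  also have "\<dots> = S * ((2 * L + 1) * S powr (\<theta> - 1))"
    using S by (simp add: powr_diff)
  finally have "c \<le> (2 * L + 1) * S powr (\<theta> - 1)"
    using S by (simp add: mult.commute[of c])
  then have "c / (2 * L + 1) \<le> S powr (\<theta> - 1)"
    using L by (simp add: pos_divide_le_eq mult.commute)
  then have "(c / (2 * L + 1)) powr (1 / (\<theta> - 1)) \<le> (S powr (\<theta> - 1)) powr (1 / (\<theta> - 1))"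
    using c L \<theta> by (intro powr_mono2) auto
  also have "\<dots> = S"
    using S \<theta> by (simp add: powr_powr)
  finally show ?thesis
    by simp
qed simp

lemma P_set_gagliardo_lower_bound:
  fixes gradV :: "'a::euclidean_space \<Rightarrow> 'a"
  defines "d \<equiv> real DIM('a)"
  assumes "AR_nonlinearity g \<alpha> \<beta>"
    and s: "0 < s1" "s1 \<le> s2" "2 * s1 < d"
    and \<alpha>: "2 + 4 * s1 / d < \<alpha>" and \<beta>: "\<beta> < 2 * d / (d - 2 * s1)"
    and \<sigma>2: "\<sigma>2 < s1"
    and V: "\<And>u. in_H s1 s2 u \<Longrightarrow>
              \<bar>\<integral>x. 1/2 * (gradV x \<bullet> x) * (u x)\<^sup>2 \<partial>lborel\<bar> \<le> \<sigma>2 * (gagliardo s1 u + gagliardo s2 u)"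
    and a: "0 < a"
  shows "\<exists>\<delta>0>0. \<delta>0 \<le> 1 \<and> (\<forall>u \<in> P_set s1 s2 gradV g a. \<delta>0 \<le> gagliardo s1 u + gagliardo s2 u)"
proof -
  interpret AR_nonlinearity g \<alpha> \<beta> by fact
  define \<theta> where "\<theta> = d * (\<alpha> - 2) / (4 * s1)"
  define \<theta>' where "\<theta>' = d * (\<beta> - 2) / (4 * s1)"
  have d: "0 < d"
    unfolding d_def by simp
  have \<alpha>2: "2 < \<alpha>"
    using \<alpha> s d by (smt (verit) divide_pos_pos)
  have \<theta>: "1 < \<theta>" "\<theta> \<le> \<theta>'"
    using \<alpha> s d exponents by (simp_all add: \<theta>_def \<theta>'_def field_simps)
  obtain C where C: "0 \<le> C" and Gtil_bound: "\<And>u::'a \<Rightarrow> real. u \<in> borel_measurable lborel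
           \<Longrightarrow> (\<integral>\<^sup>+ x. ennreal ((u x)\<^sup>2) \<partial>lborel) \<le> ennreal a \<Longrightarrow> gagliardo_nn s1 u < \<infinity>
           \<Longrightarrow> (\<integral>x. Gtil g (u x) \<partial>lborel) \<le> C * (gagliardo s1 u powr \<theta> + gagliardo s1 u powr \<theta>')"
    using integral_Gtil_le_gagliardo[OF s(1) s(3)[unfolded d_def] \<alpha>2 \<beta>[unfolded d_def], of a] a
    unfolding \<theta>_def \<theta>'_def d_def by auto
  define \<delta>0 where "\<delta>0 = min 1 (((s1 - \<sigma>2) / (2 * (d * C) + 1)) powr (1 / (\<theta> - 1)))"
  show ?thesis
  proof (intro exI[of _ \<delta>0] conjI ballI)
    have "0 < 2 * (d * C) + 1"
      using C d by (simp add: zero_le_mult_iff add_nonneg_pos)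
    then show "0 < \<delta>0" "\<delta>0 \<le> 1"
      using \<sigma>2 by (simp_all add: \<delta>0_def)
    fix u
    assume P: "u \<in> P_set s1 s2 gradV g a"
    then have H: "in_H s1 s2 u" and L2sq: "L2sq u = a"
      by (simp_all add: P_set_def S_set_def)
    then have u[measurable]: "u \<in> borel_measurable lborel" and gfin: "gagliardo_nn s1 u < \<infinity>"
      and L2: "(\<integral>\<^sup>+ x. ennreal ((u x)\<^sup>2) \<partial>lborel) = ennreal a"
      by (auto simp: in_H_def nn_integral_square_eq_L2sq)
    have "0 < gagliardo s1 u"
    proof (rule ccontr)
      assume "\<not> 0 < gagliardo s1 u"
      then have "AE x in lborel. u x = 0"
        using AE_eq_0_of_gagliardo_eq_0[OF u L2[THEN eq_refl] s(1) gfin] gagliardo_nonneg[of s1 u] by simp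
      then have "L2sq u = 0"
        unfolding L2sq_def by (subst integral_cong_AE[where g = "\<lambda>_. 0"]) auto
      then show False
        using L2sq a by simp
    qed
    then show "\<delta>0 \<le> gagliardo s1 u + gagliardo s2 u"
      unfolding \<delta>0_def
    proof (intro lower_bound_of_superlinear_bound[OF _ _ \<theta>])
      have "(s1 - \<sigma>2) * (gagliardo s1 u + gagliardo s2 u) \<le> d * (\<integral>x. Gtil g (u x) \<partial>lborel)"
        using Pohozaev_inequality[OF P s(2) V[OF H]] unfolding d_def .
      also have "\<dots> \<le> d * C * (gagliardo s1 u powr \<theta> + gagliardo s1 u powr \<theta>')"
        using Gtil_bound[OF u _ gfin] L2 d by (simp add: mult.assoc mult_left_mono)
      finally show "(s1 - \<sigma>2) * (gagliardo s1 u + gagliardo s2 u)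
          \<le> d * C * (gagliardo s1 u powr \<theta> + gagliardo s1 u powr \<theta>')" .
    qed (use \<sigma>2 C d gagliardo_nonneg[of s2 u] in auto)
  qed
qed

lemma dil_parameter_lower_bound:
  fixes u :: "'a::euclidean_space \<Rightarrow> real"
  assumes s: "0 < s1" "s1 \<le> s2" and u: "u \<in> borel_measurable lborel"
    and normalized: "gagliardo s1 u + gagliardo s2 u = 1" and t: "0 < t"
    and \<delta>0: "0 < \<delta>0" "\<delta>0 \<le> 1"
    and bound: "\<delta>0 \<le> gagliardo s1 (dil t u) + gagliardo s2 (dil t u)"
  shows "\<delta>0 powr (1 / (2 * s1)) \<le> t"
proof (cases "t < 1")
  case True
  have "t powr (2 * s2) \<le> t powr (2 * s1)"
    using True t s by (intro powr_mono') auto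
  then have "\<delta>0 \<le> t powr (2 * s1) * gagliardo s1 u + t powr (2 * s1) * gagliardo s2 u"
    using bound gagliardo_nonneg[of s2 u] mult_right_mono[of "t powr (2 * s2)" "t powr (2 * s1)" "gagliardo s2 u"]
    unfolding gagliardo_dil[OF u t] by linarith
  then have "\<delta>0 \<le> t powr (2 * s1)"
    using normalized by (simp add: distrib_left[symmetric])
  then have "\<delta>0 powr (1 / (2 * s1)) \<le> (t powr (2 * s1)) powr (1 / (2 * s1))"
    using \<delta>0 s by (intro powr_mono2) auto
  also have "\<dots> = t"
    using t s by (simp add: powr_powr)
  finally show ?thesis .
next
  case False
  then show ?thesis
    using \<delta>0 s powr_mono2[of "1 / (2 * s1)" \<delta>0 1] by simp
qed

lemma power2_powr_inverse_le_self:
  fixes x s :: real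
  assumes x: "0 < x" "x \<le> 1" and s: "0 < s" "s \<le> 1"
  shows "(x powr (1 / (2 * s)))\<^sup>2 \<le> x"
proof -
  have "(x powr (1 / (2 * s)))\<^sup>2 = x powr (1 / s)"
    using x by (simp add: powr_powr[symmetric] powr_numeral[symmetric] powr_powr)
  also have "\<dots> \<le> x powr 1"
    using x s by (intro powr_mono') (auto simp: field_simps)
  finally show ?thesis
    using x by simp
qed

theorem lemma4p2:
  fixes s1 s2 \<alpha> \<beta> \<sigma>1 :: real
    and g :: "real \<Rightarrow> real"
    and V :: "'a::euclidean_space \<Rightarrow> real"
    and gradV :: "'a \<Rightarrow> 'a"
  defines "d \<equiv> real DIM('a)"
  assumes s_range: "0 < s1" "s1 < s2" "s2 < 1"
    and d_range: "2 * s1 < d" "d < 2 * s1 * s2 / (s2 - s1)"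
    and G1: "continuous_on UNIV g" "\<And>s. g (- s) = - g s"
    and G2: "2 + 4 * s2 / d < \<alpha>" "\<alpha> < \<beta>" "\<beta> < 2 * d / (d - 2 * s1)"
            "\<And>s. \<alpha> * Gprim g s \<le> g s * s \<and> g s * s \<le> \<beta> * Gprim g s"
    and sigma1: "0 \<le> \<sigma>1" "\<sigma>1 \<le> (d * (\<alpha> - 2) - 4) / (d * (\<alpha> - 2))"
    and V2_grad: "AE x in lborel. (V has_derivative (\<lambda>h. gradV x \<bullet> h)) (at x)"
    and V2_lim: "((\<lambda>x. 1/2 * (gradV x \<bullet> x)) \<longlongrightarrow> 0) at_infinity"
    and V2_bound: "\<exists>\<sigma>2. 0 < \<sigma>2 \<and> \<sigma>2 < min (s1 - (\<beta> - 2) * d / (2 * \<beta>))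
                                        (d * (\<alpha> - 2) * (1 - \<sigma>1) / 4 - s2)
              \<and> (\<forall>u. in_H s1 s2 u \<longrightarrow>
                    \<bar>\<integral> x. 1/2 * (gradV x \<bullet> x) * (u x)\<^sup>2 \<partial>lborel\<bar>
                      \<le> \<sigma>2 * (gagliardo s1 u + gagliardo s2 u))"
    and a_pos: "0 < a"
  shows "\<exists>\<delta>>0.
           (\<forall>t u. 0 < t \<and> u \<in> S_set s1 s2 a \<and> gagliardo s1 u + gagliardo s2 u = 1
                   \<and> dil t u \<in> P_set s1 s2 gradV g a \<longrightarrow> \<delta> \<le> t)
         \<and> (\<forall>u \<in> P_set s1 s2 gradV g a. \<delta>\<^sup>2 \<le> gagliardo s1 u + gagliardo s2 u)"
proof -
  have d: "0 < d"
    unfolding d_def by simp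
  obtain \<sigma>2 where \<sigma>2: "\<sigma>2 < s1 - (\<beta> - 2) * d / (2 * \<beta>)"
    and V: "\<And>u. in_H s1 s2 u \<Longrightarrow> \<bar>\<integral>x. 1/2 * (gradV x \<bullet> x) * (u x)\<^sup>2 \<partial>lborel\<bar>
                                     \<le> \<sigma>2 * (gagliardo s1 u + gagliardo s2 u)"
    using V2_bound by auto
  have \<alpha>: "2 + 4 * s1 / d < \<alpha>"
    using G2(1) s_range d by (smt (verit) divide_strict_right_mono)
  then have "2 < \<beta>"
    using G2(2) s_range d by (smt (verit) divide_pos_pos)
  then have "\<sigma>2 < s1"
    using \<sigma>2 d by (smt (verit) divide_pos_pos mult_pos_pos)
  moreover have "AR_nonlinearity g \<alpha> \<beta>"
    using G1(1) G2(4) G2(2) by unfold_locales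
  ultimately obtain \<delta>0 where \<delta>0: "0 < \<delta>0" "\<delta>0 \<le> 1"
    and lower: "\<And>u. u \<in> P_set s1 s2 gradV g a \<Longrightarrow> \<delta>0 \<le> gagliardo s1 u + gagliardo s2 u"
    using P_set_gagliardo_lower_bound[of g \<alpha> \<beta> s1 s2 \<sigma>2 gradV a] s_range d_range(1) \<alpha> G2(3) V a_pos
    unfolding d_def by auto
  show ?thesis
  proof (intro exI[of _ "\<delta>0 powr (1 / (2 * s1))"] conjI allI impI ballI)
    show "0 < \<delta>0 powr (1 / (2 * s1))"
      using \<delta>0 by simp
    fix t u
    assume tu: "0 < t \<and> u \<in> S_set s1 s2 a \<and> gagliardo s1 u + gagliardo s2 u = 1
                \<and> dil t u \<in> P_set s1 s2 gradV g a"
    then have "u \<in> borel_measurable lborel"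
      by (simp add: S_set_def in_H_def)
    with tu show "\<delta>0 powr (1 / (2 * s1)) \<le> t"
      using s_range \<delta>0 lower by (intro dil_parameter_lower_bound[of s1 s2]) auto
  next
    fix u
    assume "u \<in> P_set s1 s2 gradV g a"
    then have "\<delta>0 \<le> gagliardo s1 u + gagliardo s2 u"
      by (rule lower)
    moreover have "(\<delta>0 powr (1 / (2 * s1)))\<^sup>2 \<le> \<delta>0"
      using \<delta>0 s_range by (intro power2_powr_inverse_le_self) auto
    ultimately show "(\<delta>0 powr (1 / (2 * s1)))\<^sup>2 \<le> gagliardo s1 u + gagliardo s2 u"
      by linarith
  qed
qed

end
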